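(* Let $l \ge 200$ be an even integer and $d = 4l$. For $T\subseteq[d]$ write $e_T\in\{0,1\}^d$ for the indicator vector of $T$. Let the demonstration set $D$ consist of all vectors $e_{T_1\cup T_2}$ with $T_1\subseteq[2l]$, $|T_1| = l/2$, and $T_2\subseteq\{2l+1,\dots,4l\}$, $|T_2| = l/2$ (i.e. $D$ is the entire support of the demonstration distribution $\mathcal D_{\mathcal E}$, which draws $T_1,T_2$ uniformly). Let the query $e_q = e_T$ with $T$ drawn uniformly among subsets of $[2l]$ of size $l$. Let $\theta\in\mathbb R^d$ have i.i.d. entries uniform on $[0,1]$, independent of $e_q$, and let $K=2$. Let $L$ be the expected prediction loss $\mathbb E\big[\langle \theta - E^\dagger E\theta, e_q\rangle^2\big]$ when the two demonstrations (rows of $E$) are selected by TopK, and $L'$ the same quantity when they are selected by TopK-Div with hyperparameter $\alpha$, where the expectation is over $\theta$, $e_q$, and the random tie-breaking in the selection. Then $L > L'$ for every $\alpha\in(0,1)$.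
   Context: Cosine similarity: $\mathrm{Sim}(u,v) = \langle u,v\rangle/(\|u\|\|v\|)$. For a vector $e$ and a nonempty finite set $S$ of vectors, $\mathrm{Div}(e,S) = 1 - \frac{1}{|S|}\sum_{s\in S}\mathrm{Sim}(e,s)$, and $\mathrm{Div}(e,\emptyset)=0$. TopK selection: choose the $K$ elements of $D$ with the largest $\mathrm{Sim}(\cdot,e_q)$, ties broken uniformly at random. TopK-Div selection with parameter $\alpha$: start with $S=\emptyset$ and, while $|S|<K$, add an element $e\in D\setminus S$ maximizing $\alpha\,\mathrm{Sim}(e,e_q) + (1-\alpha)\mathrm{Div}(e,S)$ (ties broken uniformly at random); in particular the first selected element maximizes similarity to $e_q$. Given the selected demonstrations $e_{j_1},\dots,e_{j_K}$, $E = [e_{j_1},\dots,e_{j_K}]^\top\in\mathbb R^{K\times d}$, $E^\dagger$ is its Moore–Penrose pseudoinverse, the model's prediction on query $e_q$ is $\langle e_q, E^\dagger E\theta\rangle$ (the min-norm interpolating linear regression solution), the true label is $\langle\theta,e_q\rangle$, and the prediction loss is $\langle \theta - E^\dagger E\theta, e_q\rangle^2$. *)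

theory Defs
  imports "HOL-Probability.Probability" "Jordan_Normal_Form.Matrix"
begin

definition vnorm :: "real vec \<Rightarrow> real" where
  "vnorm u = sqrt (scalar_prod u u)"

definition Sim :: "real vec \<Rightarrow> real vec \<Rightarrow> real" where
  "Sim u v = scalar_prod u v / (vnorm u * vnorm v)"

definition Div :: "real vec \<Rightarrow> real vec set \<Rightarrow> real" where
  "Div e S = (if S = {} then 0 else 1 - (\<Sum>s\<in>S. Sim e s) / real (card S))"

definition is_pinv :: "real mat \<Rightarrow> real mat \<Rightarrow> bool" where
  "is_pinv A X \<longleftrightarrow> X \<in> carrier_mat (dim_col A) (dim_row A) \<and>
     A * X * A = A \<and> X * A * X = X \<and>
     transpose_mat (A * X) = A * X \<and> transpose_mat (X * A) = X * A"

definition pinv :: "real mat \<Rightarrow> real mat" where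
  "pinv A = (THE X. is_pinv A X)"

definition indic_vec :: "nat \<Rightarrow> nat set \<Rightarrow> real vec" where
  "indic_vec d T = vec d (\<lambda>i. if i \<in> T then 1 else 0)"

definition pred_loss :: "nat \<Rightarrow> real vec \<Rightarrow> real vec \<Rightarrow> real vec list \<Rightarrow> real" where
  "pred_loss d q \<theta> xs =
     (let E = mat_of_rows d xs in (scalar_prod (\<theta> - (pinv E * E) *\<^sub>v \<theta>) q)\<^sup>2)"

text \<open>TopK: the selected K elements are those with largest similarity to the query;
  with uniform random tie-breaking the selected (ordered) list is uniform among all
  admissible choices.\<close>
definition topk_choices :: "real vec set \<Rightarrow> real vec \<Rightarrow> nat \<Rightarrow> real vec list set" where
  "topk_choices D q K = {xs. distinct xs \<and> length xs = K \<and> set xs \<subseteq> D \<and>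
      (\<forall>x\<in>set xs. \<forall>y\<in>D - set xs. Sim y q \<le> Sim x q)}"

definition topk_pmf :: "real vec set \<Rightarrow> real vec \<Rightarrow> nat \<Rightarrow> real vec list pmf" where
  "topk_pmf D q K = pmf_of_set (topk_choices D q K)"

definition div_score :: "real \<Rightarrow> real vec \<Rightarrow> real vec list \<Rightarrow> real vec \<Rightarrow> real" where
  "div_score \<alpha> q S e = \<alpha> * Sim e q + (1 - \<alpha>) * Div e (set S)"

definition greedy_maximizers :: "real \<Rightarrow> real vec set \<Rightarrow> real vec \<Rightarrow> real vec list \<Rightarrow> real vec set" where
  "greedy_maximizers \<alpha> D q S = {e \<in> D - set S. \<forall>e'\<in>D - set S. div_score \<alpha> q S e' \<le> div_score \<alpha> q S e}"

fun topk_div_pmf :: "real \<Rightarrow> real vec set \<Rightarrow> real vec \<Rightarrow> nat \<Rightarrow> real vec list pmf" where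
  "topk_div_pmf \<alpha> D q 0 = return_pmf []"
| "topk_div_pmf \<alpha> D q (Suc k) =
     bind_pmf (topk_div_pmf \<alpha> D q k)
       (\<lambda>S. map_pmf (\<lambda>e. S @ [e]) (pmf_of_set (greedy_maximizers \<alpha> D q S)))"

definition theta_measure :: "nat \<Rightarrow> (nat \<Rightarrow> real) measure" where
  "theta_measure d = PiM {0..<d} (\<lambda>_. uniform_measure lborel {0..1})"

definition expected_loss :: "nat \<Rightarrow> real vec set \<Rightarrow> (real vec \<Rightarrow> real vec list pmf) \<Rightarrow> real" where
  "expected_loss d Q sel =
     measure_pmf.expectation (pmf_of_set Q) (\<lambda>q.
       measure_pmf.expectation (sel q) (\<lambda>xs.
         \<integral>\<theta>. pred_loss d q (vec d \<theta>) xs \<partial>theta_measure d))"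

text \<open>Demonstration set and query set for parameter l (0-based indices:
  [2l] = {0..<2l}, {2l+1..4l} = {2l..<4l}).\<close>
definition demo_set :: "nat \<Rightarrow> real vec set" where
  "demo_set l = {indic_vec (4*l) (T1 \<union> T2) | T1 T2.
      T1 \<subseteq> {0..<2*l} \<and> card T1 = l div 2 \<and> T2 \<subseteq> {2*l..<4*l} \<and> card T2 = l div 2}"

definition query_set :: "nat \<Rightarrow> real vec set" where
  "query_set l = {indic_vec (4*l) T | T. T \<subseteq> {0..<2*l} \<and> card T = l}"

end

theory Submission
  imports Defs
begin

text \<open>
  Everything is governed by overlaps of supports. A demonstration \<open>e\<^bsub>T\<^sub>1 \<union> T\<^sub>2\<^esub>\<close> has
  similarity \<open>|T\<^sub>1 \<inter> T| / l \<le> 1/2\<close> to the query \<open>e\<^sub>T\<close>, with equality iff \<open>T\<^sub>1 \<subseteq> T\<close>.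
  For two demonstrations of squared norm \<open>l\<close> that both have inner product \<open>l/2\<close> with the
  query, \<open>E\<^sup>+E e\<^sub>q = c (x\<^sub>1 + x\<^sub>2)\<close>, so the loss is \<open>\<langle>\<theta>, u\<rangle>\<^sup>2\<close> for a fixed vector \<open>u\<close>;
  averaging over \<open>\<theta>\<close> gives a value that depends only on the overlap
  \<open>m = \<langle>x\<^sub>1, x\<^sub>2\<rangle>\<close>, equals \<open>l/24\<close> for \<open>m = 0\<close> and is larger for \<open>m > 0\<close>.
  TopK picks a uniformly random pair of maximally similar demonstrations, and some of these
  pairs overlap, so its expected loss exceeds \<open>l/24\<close>. TopK-Div first picks a maximally
  similar demonstration and then, since its score rewards dissimilarity, a maximally
  similar demonstration disjoint from the first one, so its loss is always \<open>l/24\<close>.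
\<close>

no_notation inner (infix "\<bullet>" 70)

section \<open>Pseudoinverse\<close>

lemma assoc_mult_mat':
  fixes A B C :: "'a::semiring_0 mat"
  shows "dim_col A = dim_row B \<Longrightarrow> dim_col B = dim_row C \<Longrightarrow> A * B * C = A * (B * C)"
  by (rule assoc_mult_mat[of A "dim_row A" "dim_col A" B "dim_col B" C "dim_col C"]) auto

lemma assoc_mult_mat_vec':
  fixes A B :: "'a::semiring_0 mat"
  shows "dim_col A = dim_row B \<Longrightarrow> dim_vec v = dim_col B \<Longrightarrow> (A * B) *\<^sub>v v = A *\<^sub>v (B *\<^sub>v v)"
  by (rule assoc_mult_mat_vec[of A "dim_row A" "dim_col A" B "dim_col B"]) (auto intro: carrier_vecI)

lemma transpose_mult':
  fixes A B :: "'a::comm_semiring_0 mat"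
  shows "dim_col A = dim_row B \<Longrightarrow> transpose_mat (A * B) = transpose_mat B * transpose_mat A"
  by (rule transpose_mult[of A "dim_row A" "dim_col A" B "dim_col B"]) auto

context
  fixes A X :: "real mat"
  assumes pinv: "is_pinv A X"
begin

lemma is_pinv_penrose:
  "X \<in> carrier_mat (dim_col A) (dim_row A)"
  "A * X * A = A" "X * A * X = X" "transpose_mat (A * X) = A * X" "transpose_mat (X * A) = X * A"
  using pinv unfolding is_pinv_def by (auto simp only:)

lemma is_pinv_dims: "dim_row X = dim_col A" "dim_col X = dim_row A"
  using is_pinv_penrose(1) by auto

lemma is_pinv_mult_transpose: "X * A * transpose_mat A = transpose_mat A"
proof -
  have "X * A * transpose_mat A = transpose_mat (X * A) * transpose_mat A"
    by (simp only: is_pinv_penrose)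
  also have "\<dots> = transpose_mat (A * (X * A))"
    by (rule transpose_mult'[symmetric]) (simp add: is_pinv_dims)
  also have "A * (X * A) = A"
    using assoc_mult_mat'[of A X A] is_pinv_penrose(2) by (simp add: is_pinv_dims)
  finally show ?thesis .
qed

lemma transpose_mult_is_pinv: "transpose_mat A * (A * X) = transpose_mat A"
proof -
  have "transpose_mat A * (A * X) = transpose_mat A * transpose_mat (A * X)"
    by (simp only: is_pinv_penrose)
  also have "\<dots> = transpose_mat (A * X * A)"
    by (rule transpose_mult'[symmetric]) (simp add: is_pinv_dims)
  also have "A * X * A = A"
    by (rule is_pinv_penrose(2))
  finally show ?thesis .
qed

end

lemma is_pinv_unique:
  fixes A X Y :: "real mat"
  assumes X: "is_pinv A X" and Y: "is_pinv A Y"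
  shows "X = Y"
proof -
  note dims = is_pinv_dims[OF X] is_pinv_dims[OF Y]
  have "X = X * (A * X)"
    using assoc_mult_mat'[of X A X] is_pinv_penrose(3)[OF X] by (simp add: dims)
  also have "\<dots> = X * (transpose_mat X * transpose_mat A)"
    using transpose_mult'[of A X] is_pinv_penrose(4)[OF X] by (simp add: dims)
  also have "\<dots> = X * (transpose_mat X * (transpose_mat A * (A * Y)))"
    by (simp only: transpose_mult_is_pinv[OF Y])
  also have "\<dots> = X * (A * X) * (A * Y)"
    using transpose_mult'[of A X] is_pinv_penrose(4)[OF X] by (simp add: dims assoc_mult_mat')
  also have "X * (A * X) = X"
    using assoc_mult_mat'[of X A X] is_pinv_penrose(3)[OF X] by (simp add: dims)
  finally have XAY: "X = X * (A * Y)" .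
  have "Y = Y * A * Y"
    by (simp only: is_pinv_penrose[OF Y])
  also have "\<dots> = transpose_mat A * transpose_mat Y * Y"
    using transpose_mult'[of Y A] is_pinv_penrose(5)[OF Y] by (simp add: dims)
  also have "\<dots> = X * A * transpose_mat A * transpose_mat Y * Y"
    by (simp only: is_pinv_mult_transpose[OF X])
  also have "\<dots> = X * (A * (Y * A * Y))"
    using transpose_mult'[of Y A] is_pinv_penrose(5)[OF Y] by (simp add: dims assoc_mult_mat')
  also have "Y * A * Y = Y"
    by (rule is_pinv_penrose(3)[OF Y])
  finally show ?thesis
    using XAY by simp
qed

lemma pinv_eqI: "is_pinv A X \<Longrightarrow> pinv A = X"
  unfolding pinv_def by (blast intro: is_pinv_unique)

lemma is_pinv_of_right_inverse:
  fixes A X :: "real mat"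
  assumes X: "X \<in> carrier_mat (dim_col A) (dim_row A)" and AX: "A * X = 1\<^sub>m (dim_row A)"
    and XA: "transpose_mat (X * A) = X * A"
  shows "is_pinv A X"
proof -
  have "A * X * A = A"
    unfolding AX by simp
  moreover have "X * A * X = X"
    using assoc_mult_mat'[of X A X] X unfolding AX by simp
  moreover have "transpose_mat (A * X) = A * X"
    unfolding AX by simp
  ultimately show ?thesis
    unfolding is_pinv_def using X XA by blast
qed

text \<open>The second factor is the inverse of the Gram matrix \<open>[[a, m], [m, a]]\<close>.\<close>

lemma is_pinv_two_rows:
  fixes x1 x2 :: "real vec"
  assumes x: "x1 \<in> carrier_vec n" "x2 \<in> carrier_vec n"
    and a: "x1 \<bullet> x1 = a" "x2 \<bullet> x2 = a" and m: "x1 \<bullet> x2 = m" and am: "a * a \<noteq> m * m"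
  shows "is_pinv (mat_of_rows n [x1, x2])
           (transpose_mat (mat_of_rows n [x1, x2]) * mat 2 2 (\<lambda>(i, j). (if i = j then a else - m) / (a * a - m * m)))"
proof -
  define E where "E = mat_of_rows n [x1, x2]"
  define G :: "real mat" where "G = mat 2 2 (\<lambda>(i, j). (if i = j then a else - m) / (a * a - m * m))"
  have E: "E \<in> carrier_mat 2 n"
    using mat_of_rows_carrier(1)[of n "[x1, x2]"] unfolding E_def by (simp add: numeral_2_eq_2)
  have G: "G \<in> carrier_mat 2 2"
    unfolding G_def by simp
  have rows: "row E 0 = x1" "row E 1 = x2"
    unfolding E_def using x by simp_all
  have "x2 \<bullet> x1 = m"
    using comm_scalar_prod[OF x] m by simp
  then have gram: "E * transpose_mat E = mat 2 2 (\<lambda>(i, j). if i = j then a else m)"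
    using E rows a m by (intro eq_matI) (auto simp: less_2_cases_iff)
  have "E * (transpose_mat E * G) = 1\<^sub>m 2"
  proof -
    have "E * (transpose_mat E * G) = E * transpose_mat E * G"
      using E G by (simp add: assoc_mult_mat')
    also have "\<dots> = 1\<^sub>m 2"
      using am unfolding gram G_def
      by (intro eq_matI) (auto simp: less_2_cases_iff scalar_prod_def row_def col_def numeral_2_eq_2
          add_divide_distrib[symmetric] diff_divide_distrib[symmetric])
    finally show ?thesis .
  qed
  moreover have "transpose_mat (transpose_mat E * G * E) = transpose_mat E * G * E"
  proof -
    have "transpose_mat G = G"
      unfolding G_def by (intro eq_matI) auto
    then show ?thesis
      using E G by (simp add: transpose_mult' assoc_mult_mat')
  qed
  ultimately show ?thesis
    unfolding E_def[symmetric] G_def[symmetric] using E G by (intro is_pinv_of_right_inverse) auto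
qed

section \<open>Loss of two demonstrations\<close>

text \<open>
  \<open>E\<^sup>+E\<close> is the orthogonal projection onto the row space, so it sends \<open>q\<close> to the
  row-space vector \<open>E\<^sup>T v\<close> that has the same inner products with the rows as \<open>q\<close>.
\<close>

lemma pred_loss_eq_residual:
  fixes d :: nat and xs :: "real vec list" and X :: "real mat"
  defines "E \<equiv> mat_of_rows d xs"
  assumes pinv: "is_pinv E X" and \<theta>: "\<theta> \<in> carrier_vec d" and q: "q \<in> carrier_vec d"
    and v: "v \<in> carrier_vec (length xs)" and Eq: "E *\<^sub>v q = E *\<^sub>v (transpose_mat E *\<^sub>v v)"
  shows "pred_loss d q \<theta> xs = (\<theta> \<bullet> (q - transpose_mat E *\<^sub>v v))\<^sup>2"
proof -
  have E: "E \<in> carrier_mat (length xs) d"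
    unfolding E_def by (rule mat_of_rows_carrier)
  note dims = is_pinv_dims[OF pinv]
  have XE: "X * E \<in> carrier_mat d d"
    using E dims by (intro carrier_matI) auto
  have "(X * E) *\<^sub>v q = X *\<^sub>v (E *\<^sub>v (transpose_mat E *\<^sub>v v))"
    unfolding Eq[symmetric] by (rule assoc_mult_mat_vec') (use E q dims in auto)
  also have "\<dots> = (X * E * transpose_mat E) *\<^sub>v v"
    using assoc_mult_mat_vec'[of "X * E" "transpose_mat E" v] assoc_mult_mat_vec'[of X E "transpose_mat E *\<^sub>v v"]
      E v dims by auto
  finally have Pq: "(X * E) *\<^sub>v q = transpose_mat E *\<^sub>v v"
    by (simp only: is_pinv_mult_transpose[OF pinv])
  have "(\<theta> - (X * E) *\<^sub>v \<theta>) \<bullet> q = \<theta> \<bullet> q - ((X * E) *\<^sub>v \<theta>) \<bullet> q"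
    by (rule minus_scalar_prod_distrib) (use \<theta> q XE in auto)
  also have "((X * E) *\<^sub>v \<theta>) \<bullet> q = \<theta> \<bullet> ((X * E) *\<^sub>v q)"
    using transpose_vec_mult_scalar[OF XE q \<theta>] unfolding is_pinv_penrose(5)[OF pinv] .
  also have "\<theta> \<bullet> q - \<theta> \<bullet> ((X * E) *\<^sub>v q) = \<theta> \<bullet> (q - transpose_mat E *\<^sub>v v)"
    unfolding Pq by (rule scalar_prod_minus_distrib[symmetric]) (use \<theta> q E v in auto)
  finally show ?thesis
    unfolding pred_loss_def Let_def E_def[symmetric] pinv_eqI[OF pinv] by (simp only:)
qed

lemma transpose_mat_of_rows_two_mult_const:
  fixes x1 x2 :: "real vec"
  assumes x: "x1 \<in> carrier_vec d" "x2 \<in> carrier_vec d"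
  shows "transpose_mat (mat_of_rows d [x1, x2]) *\<^sub>v vec 2 (\<lambda>_. c) = c \<cdot>\<^sub>v (x1 + x2)"
proof (rule eq_vecI)
  fix j assume "j < dim_vec (c \<cdot>\<^sub>v (x1 + x2))"
  then have j: "j < d"
    using x by simp
  have "(transpose_mat (mat_of_rows d [x1, x2]) *\<^sub>v vec 2 (\<lambda>_. c)) $ j
      = (\<Sum>i<2. mat_of_rows d [x1, x2] $$ (i, j) * c)"
    using j by (simp add: scalar_prod_def lessThan_atLeast0)
  also have "\<dots> = c * (x1 $ j + x2 $ j)"
    using j by (simp add: numeral_2_eq_2 mat_of_rows_index algebra_simps)
  finally show "(transpose_mat (mat_of_rows d [x1, x2]) *\<^sub>v vec 2 (\<lambda>_. c)) $ j = (c \<cdot>\<^sub>v (x1 + x2)) $ j"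
    using j x by simp
qed (use x in simp)

lemma pred_loss_two_rows:
  fixes x1 x2 q \<theta> :: "real vec"
  assumes x: "x1 \<in> carrier_vec d" "x2 \<in> carrier_vec d" and q: "q \<in> carrier_vec d" and \<theta>: "\<theta> \<in> carrier_vec d"
    and a: "x1 \<bullet> x1 = a" "x2 \<bullet> x2 = a" and m: "x1 \<bullet> x2 = m" and am: "a * a \<noteq> m * m"
    and b: "x1 \<bullet> q = b" "x2 \<bullet> q = b"
  shows "pred_loss d q \<theta> [x1, x2] = (\<theta> \<bullet> (q - (b / (a + m)) \<cdot>\<^sub>v (x1 + x2)))\<^sup>2"
proof -
  define E where "E = mat_of_rows d [x1, x2]"
  define c where "c = b / (a + m)"
  have "a + m \<noteq> 0"
    using am by (auto simp: add_eq_0_iff)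
  then have cam: "c * (a + m) = b"
    unfolding c_def by simp
  have rows: "row E 0 = x1" "row E 1 = x2"
    unfolding E_def using x by simp_all
  have ET: "transpose_mat E *\<^sub>v vec 2 (\<lambda>_. c) = c \<cdot>\<^sub>v (x1 + x2)"
    unfolding E_def using x by (rule transpose_mat_of_rows_two_mult_const)
  have "x2 \<bullet> x1 = m"
    using comm_scalar_prod[OF x] m by simp
  then have xw: "x \<bullet> (c \<cdot>\<^sub>v (x1 + x2)) = b" if "x \<in> {x1, x2}" for x
    using that x a m cam scalar_prod_add_distrib[of x d x1 x2] by (auto simp: algebra_simps)
  have dimE: "dim_row E = 2"
    unfolding E_def by simp
  have "E *\<^sub>v q = E *\<^sub>v (c \<cdot>\<^sub>v (x1 + x2))"
  proof (rule eq_vecI)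
    fix i assume "i < dim_vec (E *\<^sub>v (c \<cdot>\<^sub>v (x1 + x2)))"
    then have i: "i < dim_row E"
      by simp
    then have "row E i \<in> {x1, x2}"
      using dimE rows less_2_cases_iff by auto
    then have "row E i \<bullet> q = b" and "row E i \<bullet> (c \<cdot>\<^sub>v (x1 + x2)) = b"
      using b xw by auto
    then show "(E *\<^sub>v q) $ i = (E *\<^sub>v (c \<cdot>\<^sub>v (x1 + x2))) $ i"
      using i by simp
  qed simp
  then have Eq: "E *\<^sub>v q = E *\<^sub>v (transpose_mat E *\<^sub>v vec 2 (\<lambda>_. c))"
    unfolding ET .
  have pinv: "is_pinv E (transpose_mat E * mat 2 2 (\<lambda>(i, j). (if i = j then a else - m) / (a * a - m * m)))"
    unfolding E_def by (rule is_pinv_two_rows[OF x a m am])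
  have "pred_loss d q \<theta> [x1, x2] = (\<theta> \<bullet> (q - transpose_mat E *\<^sub>v vec 2 (\<lambda>_. c)))\<^sup>2"
    by (rule pred_loss_eq_residual[OF pinv[unfolded E_def] \<theta> q _ Eq[unfolded E_def], folded E_def]) simp
  also note ET
  finally show ?thesis
    unfolding c_def .
qed

section \<open>Averaging over the parameter\<close>

lemma has_integral_power_01: "((\<lambda>x::real. x ^ k) has_integral 1 / real (Suc k)) {0..1}"
proof -
  have "((\<lambda>x::real. x ^ k) has_integral (1 ^ Suc k / real (Suc k) - 0 ^ Suc k / real (Suc k))) {0..1}"
  proof (rule fundamental_theorem_of_calculus)
    fix x :: real
    have "((\<lambda>x::real. x ^ Suc k / real (Suc k)) has_real_derivative x ^ k) (at x within {0..1})"
      by (rule derivative_eq_intros refl | simp)+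
    then show "((\<lambda>x. x ^ Suc k / real (Suc k)) has_vector_derivative x ^ k) (at x within {0..1})"
      by (simp add: has_real_derivative_iff_has_vector_derivative)
  qed simp
  then show ?thesis
    by simp
qed

lemma has_bochner_integral_uniform_01_power:
  "has_bochner_integral (uniform_measure lborel {0..1}) (\<lambda>x::real. x ^ k) (1 / real (Suc k))"
proof (rule has_bochner_integral_nn_integral)
  have "(\<integral>\<^sup>+x. ennreal (x ^ k) \<partial>uniform_measure lborel {0..1})
      = (\<integral>\<^sup>+x. ennreal (x ^ k) * indicator {0..1} x \<partial>lborel) / emeasure lborel {0..1::real}"
    by (rule nn_integral_uniform_measure) auto
  also have "(\<integral>\<^sup>+x. ennreal (x ^ k) * indicator {0..1} x \<partial>lborel) = ennreal (1 / real (Suc k))"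
    by (rule nn_integral_has_integral_lebesgue'[OF _ has_integral_power_01]) auto
  finally show "(\<integral>\<^sup>+x. ennreal (x ^ k) \<partial>uniform_measure lborel {0..1}) = ennreal (1 / real (Suc k))"
    by (simp add: divide_ennreal_def)
qed (auto intro: AE_uniform_measureI)

lemma theta_measure_monomial:
  fixes e :: "nat \<Rightarrow> nat"
  shows "has_bochner_integral (theta_measure d) (\<lambda>\<theta>. \<Prod>k\<in>{0..<d}. \<theta> k ^ e k) (\<Prod>k\<in>{0..<d}. 1 / real (Suc (e k)))"
proof -
  interpret product_sigma_finite "\<lambda>_::nat. uniform_measure lborel {0..1::real}"
    by (simp add: product_sigma_finite_def prob_space_imp_sigma_finite prob_space_uniform_measure)
  have int: "integrable (uniform_measure lborel {0..1}) (\<lambda>x::real. x ^ e k)"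
    and val: "integral\<^sup>L (uniform_measure lborel {0..1}) (\<lambda>x::real. x ^ e k) = 1 / real (Suc (e k))" for k
    using has_bochner_integral_uniform_01_power by (simp_all add: has_bochner_integral_iff)
  show ?thesis
    unfolding theta_measure_def has_bochner_integral_iff
    using product_integrable_prod[of "{0..<d}" "\<lambda>k x. x ^ e k"] product_integral_prod[of "{0..<d}" "\<lambda>k x. x ^ e k"]
    by (simp add: int val)
qed

lemma theta_measure_second_moment:
  assumes "i < d" "j < d"
  shows "has_bochner_integral (theta_measure d) (\<lambda>\<theta>. \<theta> i * \<theta> j) (if i = j then 1/3 else 1/4)"
proof -
  define e where "e k = (if k = i then 1 else 0) + (if k = j then 1 else (0::nat))" for k
  have "(\<Prod>k\<in>{0..<d}. \<theta> k ^ e k) = \<theta> i * \<theta> j" for \<theta> :: "nat \<Rightarrow> real"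
  proof -
    have "(\<Prod>k\<in>{0..<d}. \<theta> k ^ e k) = (\<Prod>k\<in>{0..<d}. (if k = i then \<theta> k else 1) * (if k = j then \<theta> k else 1))"
      by (rule prod.cong) (auto simp: e_def power_add)
    then show ?thesis
      using assms by (simp add: prod.distrib prod.delta)
  qed
  moreover have "(\<Prod>k\<in>{0..<d}. 1 / real (Suc (e k))) = (if i = j then 1/3 else 1/4)"
  proof (cases "i = j")
    case True
    have "(\<Prod>k\<in>{0..<d}. 1 / real (Suc (e k))) = (\<Prod>k\<in>{0..<d}. if k = i then 1/3 else 1)"
      by (rule prod.cong) (auto simp: e_def True)
    then show ?thesis
      using assms True by (simp add: prod.delta)
  next
    case False
    have "(\<Prod>k\<in>{0..<d}. 1 / real (Suc (e k))) = (\<Prod>k\<in>{0..<d}. (if k = i then 1/2 else 1) * (if k = j then 1/2 else 1))"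
      by (rule prod.cong) (auto simp: e_def False)
    then show ?thesis
      using assms False by (simp add: prod.distrib prod.delta)
  qed
  ultimately show ?thesis
    using theta_measure_monomial[of d e] by simp
qed

lemma integral_theta_measure_square_scalar_prod:
  fixes w :: "real vec"
  assumes w: "w \<in> carrier_vec d"
  shows "(\<integral>\<theta>. (vec d \<theta> \<bullet> w)\<^sup>2 \<partial>theta_measure d) = (\<Sum>i<d. w $ i)\<^sup>2 / 4 + (w \<bullet> w) / 12"
proof -
  have "(vec d \<theta> \<bullet> w)\<^sup>2 = (\<Sum>i<d. \<Sum>j<d. (w $ i * w $ j) * (\<theta> i * \<theta> j))" for \<theta>
    using w unfolding scalar_prod_def power2_eq_square sum_product
    by (simp add: lessThan_atLeast0 algebra_simps)
  moreover have "has_bochner_integral (theta_measure d) (\<lambda>\<theta>. \<Sum>i<d. \<Sum>j<d. (w $ i * w $ j) * (\<theta> i * \<theta> j))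
     (\<Sum>i<d. \<Sum>j<d. (w $ i * w $ j) * (if i = j then 1/3 else 1/4))"
    by (intro has_bochner_integral_sum has_bochner_integral_mult_right theta_measure_second_moment) auto
  moreover have "(\<Sum>i<d. \<Sum>j<d. (w $ i * w $ j) * (if i = j then 1/3 else 1/4))
      = (\<Sum>i<d. \<Sum>j<d. w $ i * w $ j / 4) + (\<Sum>i<d. (w $ i)\<^sup>2 / 12)"
  proof -
    have "(\<Sum>i<d. \<Sum>j<d. (w $ i * w $ j) * (if i = j then 1/3 else 1/4))
        = (\<Sum>i<d. \<Sum>j<d. w $ i * w $ j / 4 + (if i = j then (w $ i)\<^sup>2 / 12 else 0))"
      by (intro sum.cong refl) (auto simp: power2_eq_square)
    then show ?thesis
      by (simp add: sum.distrib)
  qed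
  moreover have "w \<bullet> w = (\<Sum>i<d. (w $ i)\<^sup>2)"
    using w by (simp add: scalar_prod_def lessThan_atLeast0 power2_eq_square)
  ultimately show ?thesis
    by (simp add: has_bochner_integral_iff power2_eq_square sum_product sum_divide_distrib)
qed

definition mean_loss :: "nat \<Rightarrow> real vec \<Rightarrow> real vec list \<Rightarrow> real" where
  "mean_loss d q xs = (\<integral>\<theta>. pred_loss d q (vec d \<theta>) xs \<partial>theta_measure d)"

lemma expected_loss_eq_mean_loss:
  "expected_loss d Q sel
     = measure_pmf.expectation (pmf_of_set Q) (\<lambda>q. measure_pmf.expectation (sel q) (mean_loss d q))"
  unfolding expected_loss_def mean_loss_def[abs_def] ..

lemma mean_loss_two_rows:
  fixes x1 x2 q :: "real vec"
  assumes x: "x1 \<in> carrier_vec d" "x2 \<in> carrier_vec d" and q: "q \<in> carrier_vec d"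
    and a: "x1 \<bullet> x1 = a" "x2 \<bullet> x2 = a" and m: "x1 \<bullet> x2 = m" and am: "a * a \<noteq> m * m"
    and b: "x1 \<bullet> q = b" "x2 \<bullet> q = b"
  shows "mean_loss d q [x1, x2]
    = ((\<Sum>i<d. q $ i) - b / (a + m) * ((\<Sum>i<d. x1 $ i) + (\<Sum>i<d. x2 $ i)))\<^sup>2 / 4
      + (q \<bullet> q - 2 * b\<^sup>2 / (a + m)) / 12"
proof -
  define c where "c = b / (a + m)"
  define s where "s = x1 + x2"
  define u where "u = q - c \<cdot>\<^sub>v s"
  have s: "s \<in> carrier_vec d" and u: "u \<in> carrier_vec d"
    unfolding u_def s_def using x q by simp_all
  have "a + m \<noteq> 0"
    using am by (auto simp: add_eq_0_iff)
  then have cam: "c * (a + m) = b"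
    unfolding c_def by simp
  have "pred_loss d q (vec d \<theta>) [x1, x2] = (vec d \<theta> \<bullet> u)\<^sup>2" for \<theta>
    unfolding u_def s_def c_def by (rule pred_loss_two_rows[OF x q _ a m am b]) simp
  then have "mean_loss d q [x1, x2] = (\<Sum>i<d. u $ i)\<^sup>2 / 4 + (u \<bullet> u) / 12"
    unfolding mean_loss_def using integral_theta_measure_square_scalar_prod[OF u] by simp
  also have "(\<Sum>i<d. u $ i) = (\<Sum>i<d. q $ i - c * (x1 $ i + x2 $ i))"
    by (rule sum.cong) (use x q in \<open>auto simp: u_def s_def\<close>)
  also have "\<dots> = (\<Sum>i<d. q $ i) - c * ((\<Sum>i<d. x1 $ i) + (\<Sum>i<d. x2 $ i))"
    by (simp add: sum_subtractf sum.distrib sum_distrib_left distrib_left)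
  also have "u \<bullet> u = q \<bullet> q - 2 * b\<^sup>2 / (a + m)"
  proof -
    have "x2 \<bullet> x1 = m"
      using comm_scalar_prod[OF x] m by simp
    then have ss: "s \<bullet> s = 2 * (a + m)" and qs: "q \<bullet> s = 2 * b"
      using x q a m b comm_scalar_prod[OF q x(1)] comm_scalar_prod[OF q x(2)] unfolding s_def
      by (simp_all add: add_scalar_prod_distrib[of _ d] scalar_prod_add_distrib[of _ d])
    have "u \<bullet> u = q \<bullet> q - 2 * c * (q \<bullet> s) + c * c * (s \<bullet> s)"
      using q s comm_scalar_prod[OF q s] unfolding u_def
      by (simp add: minus_scalar_prod_distrib[of _ d] scalar_prod_minus_distrib[of _ d] algebra_simps)
    also have "\<dots> = q \<bullet> q - 2 * c * b"
      unfolding ss qs cam[symmetric] by (simp add: algebra_simps)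
    finally show ?thesis
      unfolding c_def by (simp add: power2_eq_square)
  qed
  finally show ?thesis
    unfolding c_def .
qed

text \<open>
  The value of \<open>mean_loss\<close> for a query and two demonstrations of squared norm and
  coordinate sum \<open>L\<close> whose inner products with the query are \<open>L/2\<close> and with each other \<open>m\<close>.
\<close>

definition pair_loss :: "real \<Rightarrow> real \<Rightarrow> real" where
  "pair_loss L m = (L * m / (L + m))\<^sup>2 / 4 + (L - L\<^sup>2 / (2 * (L + m))) / 12"

lemma pair_loss_0: "0 < L \<Longrightarrow> pair_loss L 0 = L / 24"
  unfolding pair_loss_def by (simp add: power2_eq_square field_simps)

lemma pair_loss_gt:
  assumes "0 < L" "0 < m"
  shows "L / 24 < pair_loss L m"
proof -
  have "pair_loss L m - L / 24 = (L * m / (L + m))\<^sup>2 / 4 + L * m / (24 * (L + m))"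
    using assms unfolding pair_loss_def by (simp add: power2_eq_square field_simps)
  moreover have "0 < L * m / (24 * (L + m))"
    using assms by simp
  moreover have "0 \<le> (L * m / (L + m))\<^sup>2 / 4"
    by simp
  ultimately show ?thesis
    by linarith
qed

lemma pair_loss_ge: "0 < L \<Longrightarrow> 0 \<le> m \<Longrightarrow> L / 24 \<le> pair_loss L m"
  using pair_loss_0 pair_loss_gt by (cases "m = 0") (auto intro: less_imp_le)

section \<open>Expectations and the selection rules\<close>

lemma expectation_eq_const:
  fixes f :: "'a \<Rightarrow> real"
  assumes "\<And>x. x \<in> set_pmf p \<Longrightarrow> f x = c"
  shows "measure_pmf.expectation p f = c"
proof -
  have "measure_pmf.expectation p f = measure_pmf.expectation p (\<lambda>_. c)"
    using assms by (intro integral_cong_AE) (auto intro!: AE_pmfI)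
  then show ?thesis
    by simp
qed

lemma expectation_pmf_of_set_gt:
  fixes f :: "'a \<Rightarrow> real"
  assumes "finite A" and "\<And>x. x \<in> A \<Longrightarrow> c \<le> f x" and "a \<in> A" and "c < f a"
  shows "c < measure_pmf.expectation (pmf_of_set A) f"
proof -
  have A: "A \<noteq> {}" "0 < card A"
    using assms(1,3) card_gt_0_iff by auto
  have "(\<Sum>x\<in>A. c) < sum f A"
    using assms by (intro sum_strict_mono_ex1) auto
  then have "c < sum f A / card A"
    using A(2) by (simp add: pos_less_divide_eq mult.commute)
  then show ?thesis
    using integral_pmf_of_set[OF A(1) assms(1)] by simp
qed

lemma finite_topk_choices: "finite D \<Longrightarrow> finite (topk_choices D q K)"
  unfolding topk_choices_def
  by (rule finite_subset[of _ "{xs. set xs \<subseteq> D \<and> length xs = K}"]) (auto intro: finite_lists_length_eq)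

lemma topk_choices_maximal:
  assumes D: "finite D" and le: "\<And>y. y \<in> D \<Longrightarrow> Sim y q \<le> s"
    and many: "K \<le> card {y \<in> D. Sim y q = s}"
    and xs: "xs \<in> topk_choices D q K" and x: "x \<in> set xs"
  shows "Sim x q = s"
proof (rule ccontr)
  assume "Sim x q \<noteq> s"
  have xs': "distinct xs" "length xs = K" "set xs \<subseteq> D"
    and top: "\<And>y. y \<in> D - set xs \<Longrightarrow> Sim y q \<le> Sim x q"
    using xs x unfolding topk_choices_def by auto
  have "Sim x q < s"
    using le[of x] x xs'(3) \<open>Sim x q \<noteq> s\<close> by auto
  then have "{y \<in> D. Sim y q = s} \<subseteq> set xs - {x}"
    using top by fastforce
  then have "card {y \<in> D. Sim y q = s} \<le> card (set xs - {x})"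
    by (intro card_mono) auto
  also have "\<dots> < K"
    using x xs'(1,2) length_pos_if_in_set[OF x] by (simp add: distinct_card)
  finally show False
    using many by simp
qed

lemma div_score_Nil: "div_score \<alpha> q [] e = \<alpha> * Sim e q"
  unfolding div_score_def Div_def by simp

lemma div_score_singleton: "div_score \<alpha> q [s] e = \<alpha> * Sim e q + (1 - \<alpha>) * (1 - Sim e s)"
  unfolding div_score_def Div_def by simp

lemma greedy_maximizers_nonempty:
  assumes "finite D" and "\<not> D \<subseteq> set S"
  shows "greedy_maximizers \<alpha> D q S \<noteq> {}"
proof -
  let ?A = "D - set S" and ?f = "div_score \<alpha> q S"
  have fin: "finite (?f ` ?A)" and ne: "?f ` ?A \<noteq> {}"
    using assms by auto
  obtain e where e: "e \<in> ?A" "?f e = Max (?f ` ?A)"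
    using Max_in[OF fin ne] by auto
  then have "e \<in> greedy_maximizers \<alpha> D q S"
    unfolding greedy_maximizers_def using Max_ge[OF fin] by auto
  then show ?thesis
    by blast
qed

text \<open>Two distinct elements keep both greedy steps away from the unspecified \<open>pmf_of_set {}\<close>.\<close>

lemma set_pmf_topk_div_pmf_2:
  assumes D: "finite D" "x \<in> D" "y \<in> D" "x \<noteq> y"
    and xs: "xs \<in> set_pmf (topk_div_pmf \<alpha> D q 2)"
  obtains e1 e2 where "xs = [e1, e2]" "e1 \<in> greedy_maximizers \<alpha> D q []"
    "e2 \<in> greedy_maximizers \<alpha> D q [e1]"
proof -
  have fin: "finite (greedy_maximizers \<alpha> D q S)" for S
    using D(1) unfolding greedy_maximizers_def by auto
  have "greedy_maximizers \<alpha> D q [] \<noteq> {}"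
    using D(2) by (intro greedy_maximizers_nonempty[OF D(1)]) auto
  moreover have "greedy_maximizers \<alpha> D q [e] \<noteq> {}" for e
    using D(2-4) by (intro greedy_maximizers_nonempty[OF D(1)]) auto
  ultimately show ?thesis
    using xs that fin by (auto simp: numeral_2_eq_2)
qed

section \<open>The demonstration and query sets\<close>

lemma dim_indic_vec [simp]: "dim_vec (indic_vec d S) = d"
  unfolding indic_vec_def by simp

lemma indic_vec_carrier [simp]: "indic_vec d S \<in> carrier_vec d"
  unfolding indic_vec_def by simp

lemma index_indic_vec: "i < d \<Longrightarrow> indic_vec d S $ i = (if i \<in> S then 1 else 0)"
  unfolding indic_vec_def by simp

lemma scalar_prod_indic_vec:
  assumes "S \<subseteq> {0..<d}"
  shows "indic_vec d S \<bullet> indic_vec d S' = real (card (S \<inter> S'))"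
proof -
  have "indic_vec d S \<bullet> indic_vec d S' = (\<Sum>i\<in>{0..<d}. if i \<in> S \<inter> S' then 1 else 0)"
    unfolding scalar_prod_def by (intro sum.cong) (auto simp: index_indic_vec)
  also have "\<dots> = (\<Sum>i\<in>{i \<in> {0..<d}. i \<in> S \<inter> S'}. 1)"
    by (rule sum.inter_filter[symmetric]) simp
  also have "{i \<in> {0..<d}. i \<in> S \<inter> S'} = S \<inter> S'"
    using assms by auto
  finally show ?thesis
    by simp
qed

lemma sum_indic_vec:
  assumes "S \<subseteq> {0..<d}"
  shows "(\<Sum>i<d. indic_vec d S $ i) = real (card S)"
proof -
  have "(\<Sum>i<d. indic_vec d S $ i) = (\<Sum>i<d. if i \<in> S then 1 else 0)"
    by (intro sum.cong) (auto simp: index_indic_vec)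
  also have "\<dots> = (\<Sum>i\<in>{i \<in> {..<d}. i \<in> S}. 1)"
    by (rule sum.inter_filter[symmetric]) simp
  also have "{i \<in> {..<d}. i \<in> S} = S"
    using assms by auto
  finally show ?thesis
    by simp
qed

lemma Sim_eq_scalar_prod_div:
  assumes "u \<bullet> u = L" "v \<bullet> v = L" "0 < L"
  shows "Sim u v = u \<bullet> v / L"
  using assms unfolding Sim_def vnorm_def by simp

lemma demo_setE:
  assumes "e \<in> demo_set l"
  obtains T1 T2 where "e = indic_vec (4 * l) (T1 \<union> T2)" "T1 \<subseteq> {0..<2 * l}" "card T1 = l div 2"
    "T2 \<subseteq> {2 * l..<4 * l}" "card T2 = l div 2"
  using assms unfolding demo_set_def by blast

lemma query_setE:
  assumes "q \<in> query_set l"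
  obtains T where "q = indic_vec (4 * l) T" "T \<subseteq> {0..<2 * l}" "card T = l"
  using assms unfolding query_set_def by blast

lemma finite_demo_set: "finite (demo_set l)"
proof (rule finite_subset)
  show "demo_set l \<subseteq> indic_vec (4 * l) ` Pow {0..<4 * l}"
  proof
    fix e assume "e \<in> demo_set l"
    then obtain T1 T2 where e: "e = indic_vec (4 * l) (T1 \<union> T2)"
      and "T1 \<subseteq> {0..<2 * l}" "T2 \<subseteq> {2 * l..<4 * l}"
      unfolding demo_set_def by blast
    then have "T1 \<union> T2 \<in> Pow {0..<4 * l}"
      by auto
    then show "e \<in> indic_vec (4 * l) ` Pow {0..<4 * l}"
      using e by (rule rev_image_eqI)
  qed
qed simp

lemma finite_query_set: "finite (query_set l)"
proof (rule finite_subset)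
  show "query_set l \<subseteq> indic_vec (4 * l) ` Pow {0..<4 * l}"
  proof
    fix q assume "q \<in> query_set l"
    then obtain T where q: "q = indic_vec (4 * l) T" and "T \<subseteq> {0..<2 * l}"
      unfolding query_set_def by blast
    then have "T \<in> Pow {0..<4 * l}"
      by auto
    then show "q \<in> indic_vec (4 * l) ` Pow {0..<4 * l}"
      using q by (rule rev_image_eqI)
  qed
qed simp

lemma query_set_nonempty: "query_set l \<noteq> {}"
proof -
  have "indic_vec (4 * l) {0..<l} \<in> query_set l"
    unfolding query_set_def by auto
  then show ?thesis
    by blast
qed

lemma disjoint_lessThan_atLeast:
  fixes n :: "'a::linorder"
  assumes "X \<subseteq> {..<n}" and "Y \<subseteq> {n..}"
  shows "X \<inter> Y = {}"
proof (rule equals0I)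
  fix x assume "x \<in> X \<inter> Y"
  then have "x < n" "n \<le> x"
    using assms by auto
  then show False
    by simp
qed

lemma query_set_vec:
  assumes "q \<in> query_set l"
  shows "q \<in> carrier_vec (4 * l)" "q \<bullet> q = real l" "(\<Sum>i<4 * l. q $ i) = real l"
proof -
  obtain T where q: "q = indic_vec (4 * l) T" "T \<subseteq> {0..<2 * l}" "card T = l"
    using assms by (rule query_setE)
  then have "T \<subseteq> {0..<4 * l}"
    by auto
  then show "q \<in> carrier_vec (4 * l)" "q \<bullet> q = real l" "(\<Sum>i<4 * l. q $ i) = real l"
    using q scalar_prod_indic_vec sum_indic_vec by simp_all
qed

lemma demo_query_scalar_prod:
  assumes "T1 \<subseteq> {0..<2 * l}" "T2 \<subseteq> {2 * l..<4 * l}" "T \<subseteq> {0..<2 * l}"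
  shows "indic_vec (4 * l) (T1 \<union> T2) \<bullet> indic_vec (4 * l) T = real (card (T1 \<inter> T))"
proof -
  have "T \<inter> T2 = {}"
    using assms(2,3) by (intro disjoint_lessThan_atLeast[of _ "2 * l"]) auto
  then have "(T1 \<union> T2) \<inter> T = T1 \<inter> T"
    by auto
  moreover have "T1 \<union> T2 \<subseteq> {0..<4 * l}"
    using assms(1,2) by auto
  ultimately show ?thesis
    using scalar_prod_indic_vec by metis
qed

context
  fixes l :: nat
  assumes l_even: "even l" and l_pos: "0 < l"
begin

lemma demo_support:
  assumes "T1 \<subseteq> {0..<2 * l}" "card T1 = l div 2" "T2 \<subseteq> {2 * l..<4 * l}" "card T2 = l div 2"
  shows "T1 \<union> T2 \<subseteq> {0..<4 * l}" "card (T1 \<union> T2) = l"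
proof -
  show "T1 \<union> T2 \<subseteq> {0..<4 * l}"
    using assms by auto
  have "T1 \<inter> T2 = {}"
    using assms(1,3) by (intro disjoint_lessThan_atLeast[of _ "2 * l"]) auto
  moreover have "finite T1" "finite T2"
    using assms(1,3) finite_subset by blast+
  ultimately show "card (T1 \<union> T2) = l"
    using assms l_even by (auto simp: card_Un_disjoint elim!: evenE)
qed

lemma demo_set_vec:
  assumes "e \<in> demo_set l"
  shows "e \<in> carrier_vec (4 * l)" "e \<bullet> e = real l" "(\<Sum>i<4 * l. e $ i) = real l"
proof -
  obtain T1 T2 where e: "e = indic_vec (4 * l) (T1 \<union> T2)" "T1 \<subseteq> {0..<2 * l}" "card T1 = l div 2"
    "T2 \<subseteq> {2 * l..<4 * l}" "card T2 = l div 2"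
    using assms by (rule demo_setE)
  note S = demo_support[OF e(2-5)]
  show "e \<in> carrier_vec (4 * l)" "e \<bullet> e = real l" "(\<Sum>i<4 * l. e $ i) = real l"
    using e(1) S scalar_prod_indic_vec[OF S(1)] sum_indic_vec[OF S(1)] by simp_all
qed

lemma demo_query_le:
  assumes "e \<in> demo_set l" "q \<in> query_set l"
  shows "e \<bullet> q \<le> real l / 2"
proof -
  obtain T1 T2 where e: "e = indic_vec (4 * l) (T1 \<union> T2)" "T1 \<subseteq> {0..<2 * l}" "card T1 = l div 2"
    "T2 \<subseteq> {2 * l..<4 * l}" "card T2 = l div 2"
    using assms(1) by (rule demo_setE)
  obtain T where q: "q = indic_vec (4 * l) T" "T \<subseteq> {0..<2 * l}" "card T = l"
    using assms(2) by (rule query_setE)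
  have "card (T1 \<inter> T) \<le> card T1"
    using e(2) finite_subset by (intro card_mono) auto
  then show ?thesis
    using e(1,3) q(1) demo_query_scalar_prod[OF e(2,4) q(2)] l_even by (auto elim!: evenE)
qed

lemma maximal_demo_lower_subset:
  assumes "T1 \<subseteq> {0..<2 * l}" "card T1 = l div 2" "T2 \<subseteq> {2 * l..<4 * l}" "T \<subseteq> {0..<2 * l}"
    and "indic_vec (4 * l) (T1 \<union> T2) \<bullet> indic_vec (4 * l) T = real l / 2"
  shows "T1 \<subseteq> T"
proof -
  have "finite T1"
    using assms(1) finite_subset by blast
  moreover have "card (T1 \<inter> T) = card T1"
    using assms(2,5) demo_query_scalar_prod[OF assms(1,3,4)] l_even by (auto elim!: evenE)
  ultimately show ?thesis
    using card_subset_eq[of T1 "T1 \<inter> T"] by blast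
qed

lemma demo_overlap:
  assumes "e \<in> demo_set l" "e' \<in> demo_set l"
  shows "0 \<le> e \<bullet> e'" and "e \<noteq> e' \<Longrightarrow> e \<bullet> e' < real l"
proof -
  obtain T1 T2 where e: "e = indic_vec (4 * l) (T1 \<union> T2)" "T1 \<subseteq> {0..<2 * l}" "card T1 = l div 2"
    "T2 \<subseteq> {2 * l..<4 * l}" "card T2 = l div 2"
    using assms(1) by (rule demo_setE)
  obtain T1' T2' where e': "e' = indic_vec (4 * l) (T1' \<union> T2')" "T1' \<subseteq> {0..<2 * l}" "card T1' = l div 2"
    "T2' \<subseteq> {2 * l..<4 * l}" "card T2' = l div 2"
    using assms(2) by (rule demo_setE)
  define S S' where "S = T1 \<union> T2" and "S' = T1' \<union> T2'"
  have S: "S \<subseteq> {0..<4 * l}" "card S = l" and S': "S' \<subseteq> {0..<4 * l}" "card S' = l"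
    unfolding S_def S'_def using demo_support e e' by auto
  have fin: "finite S" "finite S'"
    using S S' finite_subset by blast+
  have dot: "e \<bullet> e' = real (card (S \<inter> S'))"
    using e(1) e'(1) scalar_prod_indic_vec[OF S(1)] unfolding S_def S'_def by simp
  then show "0 \<le> e \<bullet> e'"
    by simp
  assume "e \<noteq> e'"
  then have "S \<noteq> S'"
    using e(1) e'(1) unfolding S_def S'_def by auto
  then have "\<not> S \<subseteq> S'"
    using card_subset_eq[OF fin(2)] S(2) S'(2) by auto
  then have "card (S \<inter> S') < card S"
    using fin by (intro psubset_card_mono) auto
  then show "e \<bullet> e' < real l"
    using dot S by simp
qed

lemma Sim_demo_query:
  assumes "e \<in> demo_set l" "q \<in> query_set l"
  shows "Sim e q = e \<bullet> q / real l"
  using Sim_eq_scalar_prod_div demo_set_vec(2)[OF assms(1)] query_set_vec(2)[OF assms(2)] l_pos by simp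

lemma Sim_demo_demo:
  assumes "e \<in> demo_set l" "e' \<in> demo_set l"
  shows "Sim e e' = e \<bullet> e' / real l"
  using Sim_eq_scalar_prod_div demo_set_vec(2)[OF assms(1)] demo_set_vec(2)[OF assms(2)] l_pos by simp

lemma overlapping_maximal_pair:
  assumes "q \<in> query_set l"
  obtains y1 y2 where "y1 \<in> demo_set l" "y2 \<in> demo_set l" "y1 \<noteq> y2"
    "y1 \<bullet> q = real l / 2" "y2 \<bullet> q = real l / 2" "0 < y1 \<bullet> y2"
proof -
  obtain T where q: "q = indic_vec (4 * l) T" "T \<subseteq> {0..<2 * l}" "card T = l"
    using assms by (rule query_setE)
  define h where "h = l div 2"
  have h: "0 < h" "h \<le> l" "real h = real l / 2"
    unfolding h_def using l_even l_pos by auto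
  obtain A where A: "A \<subseteq> T" "card A = h"
    using obtain_subset_with_card_n[of h T] h q by auto
  have "finite A"
    using A h card_gt_0_iff by blast
  define B B' where "B = {2 * l..<2 * l + h}" and "B' = {2 * l + 1..<2 * l + 1 + h}"
  have B: "B \<subseteq> {2 * l..<4 * l}" "card B = h" and B': "B' \<subseteq> {2 * l..<4 * l}" "card B' = h"
    unfolding B_def B'_def using h by auto
  have A': "A \<subseteq> {0..<2 * l}"
    using A q by auto
  define y1 y2 where "y1 = indic_vec (4 * l) (A \<union> B)" and "y2 = indic_vec (4 * l) (A \<union> B')"
  have y: "y1 \<in> demo_set l" "y2 \<in> demo_set l"
    unfolding y1_def y2_def demo_set_def h_def[symmetric] using A A' B B' by blast+
  have sub: "A \<union> B \<subseteq> {0..<4 * l}" "A \<union> B' \<subseteq> {0..<4 * l}"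
    using A' B B' by auto
  have "A \<inter> T = A"
    using A(1) by auto
  then have yq: "y1 \<bullet> q = real l / 2" "y2 \<bullet> q = real l / 2"
    unfolding y1_def y2_def q(1)
    using demo_query_scalar_prod[OF A' B(1) q(2)] demo_query_scalar_prod[OF A' B'(1) q(2)] A h by simp_all
  have yy: "0 < y1 \<bullet> y2"
  proof -
    have "card A \<le> card ((A \<union> B) \<inter> (A \<union> B'))"
      using \<open>finite A\<close> unfolding B_def B'_def by (intro card_mono) auto
    then show ?thesis
      unfolding y1_def y2_def using scalar_prod_indic_vec[OF sub(1)] A h by simp
  qed
  have ne: "y1 \<noteq> y2"
  proof -
    have "2 * l \<notin> A"
      using A' by auto
    then have "y1 $ (2 * l) \<noteq> y2 $ (2 * l)"
      unfolding y1_def y2_def B_def B'_def using h l_pos by (simp add: index_indic_vec)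
    then show ?thesis
      by metis
  qed
  from y ne yq yy show ?thesis
    by (rule that)
qed

lemma disjoint_maximal_demo:
  assumes "q \<in> query_set l" "e \<in> demo_set l" and eq: "e \<bullet> q = real l / 2"
  obtains y where "y \<in> demo_set l" "y \<bullet> q = real l / 2" "y \<bullet> e = 0"
proof -
  obtain T where q: "q = indic_vec (4 * l) T" "T \<subseteq> {0..<2 * l}" "card T = l"
    using assms(1) by (rule query_setE)
  obtain T1 T2 where e: "e = indic_vec (4 * l) (T1 \<union> T2)" "T1 \<subseteq> {0..<2 * l}" "card T1 = l div 2"
    "T2 \<subseteq> {2 * l..<4 * l}" "card T2 = l div 2"
    using assms(2) by (rule demo_setE)
  have half: "real (l div 2) = real l / 2" "l - l div 2 = l div 2"
    using l_even by auto
  have fin: "finite T" "finite T1" "finite T2"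
    using q(2) e(2,4) finite_subset by blast+
  have TT2: "T \<inter> T2 = {}"
    using q(2) e(4) by (intro disjoint_lessThan_atLeast[of _ "2 * l"]) auto
  have T1T: "T1 \<subseteq> T"
    using e(2,3,4) q(2) eq[unfolded e(1) q(1)] by (rule maximal_demo_lower_subset)
  have "card ({2 * l..<4 * l} - T2) = 2 * l - l div 2"
    using e(4,5) fin(3) by (simp add: card_Diff_subset)
  moreover have "l div 2 \<le> 2 * l - l div 2"
    by presburger
  ultimately obtain B where B: "B \<subseteq> {2 * l..<4 * l} - T2" "card B = l div 2"
    using obtain_subset_with_card_n[of "l div 2" "{2 * l..<4 * l} - T2"] by auto
  have B': "B \<subseteq> {2 * l..<4 * l}"
    using B(1) by auto
  have TT1: "T - T1 \<subseteq> {0..<2 * l}" "card (T - T1) = l div 2"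
    using q(2,3) T1T fin(2) e(3) half(2) by (auto simp: card_Diff_subset)
  define y where "y = indic_vec (4 * l) ((T - T1) \<union> B)"
  have y: "y \<in> demo_set l"
    unfolding y_def demo_set_def using TT1 B' B(2) by blast
  have sub: "(T - T1) \<union> B \<subseteq> {0..<4 * l}"
    using TT1 B' by auto
  have "T \<inter> B = {}" "T1 \<inter> B = {}"
    using q(2) e(2) B' by (intro disjoint_lessThan_atLeast[of _ "2 * l"]; auto)+
  moreover have "B \<inter> T2 = {}"
    using B(1) by auto
  ultimately have "((T - T1) \<union> B) \<inter> T = T - T1" "((T - T1) \<union> B) \<inter> (T1 \<union> T2) = {}"
    using TT2 by auto
  then have "y \<bullet> q = real l / 2" "y \<bullet> e = 0"
    unfolding y_def using q(1) e(1) scalar_prod_indic_vec[OF sub] TT1 half(1) by simp_all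
  with y show ?thesis
    by (rule that)
qed

lemma demo_Sim_le_half:
  assumes "e \<in> demo_set l" "q \<in> query_set l"
  shows "Sim e q \<le> 1 / 2"
  unfolding Sim_demo_query[OF assms] using demo_query_le[OF assms] l_pos by (simp add: field_simps)

lemma demo_Sim_eq_half_iff:
  assumes "e \<in> demo_set l" "q \<in> query_set l"
  shows "Sim e q = 1 / 2 \<longleftrightarrow> e \<bullet> q = real l / 2"
  unfolding Sim_demo_query[OF assms] using l_pos by (auto simp: field_simps)

lemma mean_loss_maximal_pair:
  assumes q: "q \<in> query_set l" and x: "x1 \<in> demo_set l" "x2 \<in> demo_set l" "x1 \<noteq> x2"
    and b: "x1 \<bullet> q = real l / 2" "x2 \<bullet> q = real l / 2"
  shows "mean_loss (4 * l) q [x1, x2] = pair_loss (real l) (x1 \<bullet> x2)"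
proof -
  define m where "m = x1 \<bullet> x2"
  have m: "0 \<le> m" "m < real l"
    unfolding m_def using demo_overlap[OF x(1,2)] x(3) by auto
  then have "m * m < real l * real l"
    by (intro mult_strict_mono) auto
  then have am: "real l * real l \<noteq> m * m"
    by simp
  note v1 = demo_set_vec[OF x(1)] and v2 = demo_set_vec[OF x(2)] and vq = query_set_vec[OF q]
  have "mean_loss (4 * l) q [x1, x2]
      = (real l - real l / 2 / (real l + m) * (real l + real l))\<^sup>2 / 4
        + (real l - 2 * (real l / 2)\<^sup>2 / (real l + m)) / 12"
    using mean_loss_two_rows[OF v1(1) v2(1) vq(1) v1(2) v2(2) m_def[symmetric] am b]
    unfolding vq(2,3) v1(3) v2(3) .
  also have "\<dots> = pair_loss (real l) m"
  proof -
    have "real l + m \<noteq> 0"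
      using m l_pos by simp
    then have "real l - real l / 2 / (real l + m) * (real l + real l) = real l * m / (real l + m)"
      and "real l - 2 * (real l / 2)\<^sup>2 / (real l + m) = real l - (real l)\<^sup>2 / (2 * (real l + m))"
      by (simp_all add: field_simps power2_eq_square)
    then show ?thesis
      unfolding pair_loss_def by simp
  qed
  finally show ?thesis
    unfolding m_def .
qed

lemma topk_choice_maximal_pair:
  assumes q: "q \<in> query_set l" and xs: "xs \<in> topk_choices (demo_set l) q 2"
  obtains x1 x2 where "xs = [x1, x2]" "x1 \<in> demo_set l" "x2 \<in> demo_set l" "x1 \<noteq> x2"
    "x1 \<bullet> q = real l / 2" "x2 \<bullet> q = real l / 2"
proof -
  obtain y1 y2 where y: "y1 \<in> demo_set l" "y2 \<in> demo_set l" "y1 \<noteq> y2"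
    "y1 \<bullet> q = real l / 2" "y2 \<bullet> q = real l / 2"
    using overlapping_maximal_pair[OF q] by metis
  have "card {y1, y2} \<le> card {y \<in> demo_set l. Sim y q = 1 / 2}"
    using y demo_Sim_eq_half_iff[OF _ q] finite_demo_set by (intro card_mono) auto
  then have many: "2 \<le> card {y \<in> demo_set l. Sim y q = 1 / 2}"
    using y(3) by simp
  have xs': "distinct xs" "length xs = 2" "set xs \<subseteq> demo_set l"
    using xs unfolding topk_choices_def by auto
  have half: "x \<bullet> q = real l / 2" if "x \<in> set xs" for x
  proof -
    have "Sim x q = 1 / 2"
      using finite_demo_set demo_Sim_le_half[OF _ q] many xs that by (rule topk_choices_maximal)
    then show ?thesis
      using demo_Sim_eq_half_iff[OF _ q] xs'(3) that by blast
  qed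
  obtain x1 x2 where x: "xs = [x1, x2]"
    using xs'(2) by (auto simp: numeral_2_eq_2 length_Suc_conv)
  show ?thesis
    using that[OF x] xs' half unfolding x by simp
qed

lemma expected_topk_loss_gt:
  assumes q: "q \<in> query_set l"
  shows "real l / 24 < measure_pmf.expectation (topk_pmf (demo_set l) q 2) (mean_loss (4 * l) q)"
proof -
  obtain y1 y2 where y: "y1 \<in> demo_set l" "y2 \<in> demo_set l" "y1 \<noteq> y2"
    "y1 \<bullet> q = real l / 2" "y2 \<bullet> q = real l / 2" "0 < y1 \<bullet> y2"
    using overlapping_maximal_pair[OF q] by metis
  have "Sim y1 q = 1 / 2" "Sim y2 q = 1 / 2"
    using y demo_Sim_eq_half_iff[OF _ q] by auto
  then have "Sim y q \<le> Sim x q" if "x \<in> {y1, y2}" "y \<in> demo_set l" for x y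
    using that demo_Sim_le_half[OF that(2) q] by auto
  then have mem: "[y1, y2] \<in> topk_choices (demo_set l) q 2"
    unfolding topk_choices_def using y(1-3) by auto
  have gt: "real l / 24 < mean_loss (4 * l) q [y1, y2]"
    unfolding mean_loss_maximal_pair[OF q y(1-5)] using pair_loss_gt y(6) l_pos by simp
  have ge: "real l / 24 \<le> mean_loss (4 * l) q xs" if xs: "xs \<in> topk_choices (demo_set l) q 2" for xs
  proof -
    obtain x1 x2 where x: "xs = [x1, x2]" "x1 \<in> demo_set l" "x2 \<in> demo_set l" "x1 \<noteq> x2"
      "x1 \<bullet> q = real l / 2" "x2 \<bullet> q = real l / 2"
      using q xs by (rule topk_choice_maximal_pair)
    then show ?thesis
      unfolding x(1) mean_loss_maximal_pair[OF q x(2-6)]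
      using pair_loss_ge demo_overlap(1)[OF x(2,3)] l_pos by simp
  qed
  show ?thesis
    unfolding topk_pmf_def using finite_topk_choices[OF finite_demo_set] ge mem gt
    by (rule expectation_pmf_of_set_gt[where f = "mean_loss (4 * l) q"])
qed

lemma first_greedy_maximal:
  assumes q: "q \<in> query_set l" and \<alpha>: "0 < \<alpha>"
    and e1: "e1 \<in> greedy_maximizers \<alpha> (demo_set l) q []"
  shows "e1 \<in> demo_set l" "e1 \<bullet> q = real l / 2"
proof -
  obtain y where y: "y \<in> demo_set l" "y \<bullet> q = real l / 2"
    using overlapping_maximal_pair[OF q] by metis
  show e1D: "e1 \<in> demo_set l"
    using e1 unfolding greedy_maximizers_def by auto
  have "\<alpha> * Sim y q \<le> \<alpha> * Sim e1 q"
    using e1 y(1) unfolding greedy_maximizers_def div_score_Nil by auto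
  then have "1 / 2 \<le> Sim e1 q"
    using \<alpha> demo_Sim_eq_half_iff[OF y(1) q] y(2) by (simp add: mult_le_cancel_left_pos)
  then show "e1 \<bullet> q = real l / 2"
    using demo_Sim_le_half[OF e1D q] demo_Sim_eq_half_iff[OF e1D q] by simp
qed

lemma second_greedy_disjoint:
  assumes q: "q \<in> query_set l" and \<alpha>: "0 < \<alpha>" "\<alpha> < 1"
    and e1: "e1 \<in> demo_set l" "e1 \<bullet> q = real l / 2"
    and e2: "e2 \<in> greedy_maximizers \<alpha> (demo_set l) q [e1]"
  shows "e2 \<in> demo_set l" "e2 \<noteq> e1" "e2 \<bullet> q = real l / 2" "e2 \<bullet> e1 = 0"
proof -
  obtain y where y: "y \<in> demo_set l" "y \<bullet> q = real l / 2" "y \<bullet> e1 = 0"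
    using q e1 by (rule disjoint_maximal_demo)
  have "y \<noteq> e1"
    using y(3) demo_set_vec(2)[OF e1(1)] l_pos by auto
  show e2D: "e2 \<in> demo_set l" "e2 \<noteq> e1"
    using e2 unfolding greedy_maximizers_def by auto
  have "div_score \<alpha> q [e1] y \<le> div_score \<alpha> q [e1] e2"
    using e2 y(1) \<open>y \<noteq> e1\<close> unfolding greedy_maximizers_def by auto
  moreover have "div_score \<alpha> q [e1] y = (\<alpha> * (real l / 2) + (1 - \<alpha>) * real l) / real l"
    unfolding div_score_singleton Sim_demo_query[OF y(1) q] Sim_demo_demo[OF y(1) e1(1)] y(2,3)
    using l_pos by (simp add: field_simps)
  moreover have "div_score \<alpha> q [e1] e2 = (\<alpha> * (e2 \<bullet> q) + (1 - \<alpha>) * (real l - e2 \<bullet> e1)) / real l"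
    unfolding div_score_singleton Sim_demo_query[OF e2D(1) q] Sim_demo_demo[OF e2D(1) e1(1)]
    using l_pos by (simp add: field_simps)
  ultimately have "\<alpha> * (real l / 2) + (1 - \<alpha>) * real l \<le> \<alpha> * (e2 \<bullet> q) + (1 - \<alpha>) * (real l - e2 \<bullet> e1)"
    using l_pos by (simp add: divide_le_cancel)
  then have "\<alpha> * (real l / 2 - e2 \<bullet> q) + (1 - \<alpha>) * (e2 \<bullet> e1) \<le> 0"
    by (simp add: algebra_simps)
  moreover have "0 \<le> \<alpha> * (real l / 2 - e2 \<bullet> q)"
    using \<alpha> demo_query_le[OF e2D(1) q] by simp
  moreover have "0 \<le> (1 - \<alpha>) * (e2 \<bullet> e1)"
    using \<alpha> demo_overlap(1)[OF e2D(1) e1(1)] by simp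
  ultimately have "\<alpha> * (real l / 2 - e2 \<bullet> q) = 0" "(1 - \<alpha>) * (e2 \<bullet> e1) = 0"
    by linarith+
  then show "e2 \<bullet> q = real l / 2" "e2 \<bullet> e1 = 0"
    using \<alpha> by simp_all
qed

lemma expected_topk_div_loss:
  assumes q: "q \<in> query_set l" and \<alpha>: "0 < \<alpha>" "\<alpha> < 1"
  shows "measure_pmf.expectation (topk_div_pmf \<alpha> (demo_set l) q 2) (mean_loss (4 * l) q) = real l / 24"
proof (rule expectation_eq_const)
  fix xs assume xs: "xs \<in> set_pmf (topk_div_pmf \<alpha> (demo_set l) q 2)"
  obtain y1 y2 where y: "y1 \<in> demo_set l" "y2 \<in> demo_set l" "y1 \<noteq> y2"
    using overlapping_maximal_pair[OF q] by metis
  obtain e1 e2 where e: "xs = [e1, e2]" "e1 \<in> greedy_maximizers \<alpha> (demo_set l) q []"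
    "e2 \<in> greedy_maximizers \<alpha> (demo_set l) q [e1]"
    using finite_demo_set y xs by (rule set_pmf_topk_div_pmf_2)
  note e1 = first_greedy_maximal[OF q \<alpha>(1) e(2)]
  note e2 = second_greedy_disjoint[OF q \<alpha> e1 e(3)]
  have "e1 \<bullet> e2 = 0"
    using e2(4) comm_scalar_prod[OF demo_set_vec(1)[OF e1(1)] demo_set_vec(1)[OF e2(1)]] by simp
  then show "mean_loss (4 * l) q xs = real l / 24"
    unfolding e(1) mean_loss_maximal_pair[OF q e1(1) e2(1) e2(2)[symmetric] e1(2) e2(3)]
    using pair_loss_0 l_pos by simp
qed

end

theorem theorem1:
  fixes l :: nat and \<alpha> :: real
  assumes "l \<ge> 200" and "even l" and "0 < \<alpha>" and "\<alpha> < 1"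
  shows "expected_loss (4*l) (query_set l) (\<lambda>q. topk_pmf (demo_set l) q 2)
       > expected_loss (4*l) (query_set l) (\<lambda>q. topk_div_pmf \<alpha> (demo_set l) q 2)"
proof -
  have l: "even l" "0 < l" \<comment> \<open>of \<open>l \<ge> 200\<close> only \<open>l > 0\<close> is needed\<close>
    using assms(1,2) by auto
  obtain q0 where q0: "q0 \<in> query_set l"
    using query_set_nonempty by blast
  have "expected_loss (4 * l) (query_set l) (\<lambda>q. topk_div_pmf \<alpha> (demo_set l) q 2) = real l / 24"
    unfolding expected_loss_eq_mean_loss
  proof (rule expectation_eq_const)
    fix q assume "q \<in> set_pmf (pmf_of_set (query_set l))"
    then have "q \<in> query_set l"
      using finite_query_set query_set_nonempty by simp
    then show "measure_pmf.expectation (topk_div_pmf \<alpha> (demo_set l) q 2) (mean_loss (4 * l) q) = real l / 24"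
      by (rule expected_topk_div_loss[OF l _ assms(3,4)])
  qed
  also have "real l / 24 < expected_loss (4 * l) (query_set l) (\<lambda>q. topk_pmf (demo_set l) q 2)"
    unfolding expected_loss_eq_mean_loss
    using finite_query_set less_imp_le[OF expected_topk_loss_gt[OF l]] q0 expected_topk_loss_gt[OF l q0]
    by (rule expectation_pmf_of_set_gt)
  finally show ?thesis .
qed

end
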